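(* Let $S=\langle P,\varphi\rangle$ be a SUT model, $t$ a strength, $N\ge1$ an integer and $lb$ an integer with $0\le lb<CAN(t,S)$. If $N\ge CAN(t,S)$, then the optimal cost of the Partial MaxSAT instance $PMSat_{CCX}^{N,t,S,lb}$ (defined in the context) is $CAN(t,S)-(lb+1)$; otherwise it is $\infty$.
   Context: A SUT model is $S=\langle P,\varphi\rangle$, where $P$ is a finite set of parameters, each $p\in P$ having a finite nonempty domain $d(p)$, and $\varphi$ is a propositional formula whose atoms have the form $(p=v)$ with $p\in P$, $v\in d(p)$. A test case is a full assignment $A$ giving each $p$ a value in $d(p)$ such that $\varphi$ is true when each atom $(p=v)$ is read as true iff $A(p)=v$; it is assumed that at least one test case exists. Fix a strength $t$ with $1\le t\le|P|$. A $t$-tuple is an assignment of values to exactly $t$ distinct parameters, viewed as a set of pairs $(p,v)$; a test case covers $\tau$ if it assigns $v$ to $p$ for every $(p,v)\in\tau$. A $t$-tuple is allowed if some test case covers it; $\mathcal T_a$ is the set of allowed $t$-tuples. A covering array $CA(N;t,S)$ is a list of $N$ test cases (repetitions allowed) covering every allowed $t$-tuple; $CAN(t,S)$ is the minimum $N$ for which a $CA(N;t,S)$ exists. $[N]=\{1,\dots,N\}$. A (weighted) Partial MaxSAT instance consists of hard constraints and soft clauses $(c,w)$ with positive integer weight $w$; its optimal cost is the minimum, over truth assignments satisfying all hard constraints, of the total weight of falsified soft clauses, and $\infty$ if the hard constraints are unsatisfiable. Variables: $x_{i,p,v}$ ($i\in[N]$, $p\in P$, $v\in d(p)$), $c^i_\tau$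 ($i\in\{0,\dots,N\}$, $\tau\in\mathcal T_a$), $u_i$ ($i\in\{lb+2,\dots,N\}$). Hard constraints of $PMSat_{CCX}^{N,t,S,lb}$: (X) for every $i\in[N]$, $p\in P$: exactly one of $\{x_{i,p,v}:v\in d(p)\}$ is true; (SUTX) for every $i\in[N]$: the formula obtained from $\varphi$ by replacing each atom $(p=v)$ with $x_{i,p,v}$; (CCX) (a) for every $i\in[N]$, $\tau\in\mathcal T_a$, $(p,v)\in\tau$: $c^i_\tau\rightarrow(c^{i-1}_\tau\vee x_{i,p,v})$; (b) for every $\tau\in\mathcal T_a$: the unit clause $c^N_\tau$; (c) for every $\tau\in\mathcal T_a$: $c^N_\tau\rightarrow\neg c^0_\tau$; (BSU) for every $i\in\{lb+2,\dots,N-1\}$: $u_{i+1}\rightarrow u_i$; (CCU) for every $i\in\{lb+2,\dots,N\}$, $\tau\in\mathcal T_a$: $\neg c^{i-1}_\tau\rightarrow u_i$. Soft clauses: $(\neg u_i,1)$ for every $i\in\{lb+2,\dots,N\}$. *)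

theory Defs
  imports Main "HOL-Library.Extended_Nat" "HOL-Library.FuncSet"
begin

datatype 'a pform =
    Atom 'a
  | TT
  | FF
  | Neg "'a pform"
  | And "'a pform" "'a pform"
  | Or "'a pform" "'a pform"
  | Imp "'a pform" "'a pform"

primrec peval :: "('a \<Rightarrow> bool) \<Rightarrow> 'a pform \<Rightarrow> bool" where
  "peval I (Atom a) = I a"
| "peval I TT = True"
| "peval I FF = False"
| "peval I (Neg f) = (\<not> peval I f)"
| "peval I (And f g) = (peval I f \<and> peval I g)"
| "peval I (Or f g) = (peval I f \<or> peval I g)"
| "peval I (Imp f g) = (peval I f \<longrightarrow> peval I g)"

primrec atoms :: "'a pform \<Rightarrow> 'a set" where
  "atoms (Atom a) = {a}"
| "atoms TT = {}"
| "atoms FF = {}"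
| "atoms (Neg f) = atoms f"
| "atoms (And f g) = atoms f \<union> atoms g"
| "atoms (Or f g) = atoms f \<union> atoms g"
| "atoms (Imp f g) = atoms f \<union> atoms g"

definition list_of_set :: "'a set \<Rightarrow> 'a list" where
  "list_of_set S = (SOME xs. set xs = S \<and> distinct xs)"

definition exactly_one :: "'a set \<Rightarrow> 'a pform" where
  "exactly_one S =
     And (foldr (\<lambda>a f. Or (Atom a) f) (list_of_set S) FF)
         (foldr (\<lambda>(a, b) f. And (Neg (And (Atom a) (Atom b))) f)
                (list_of_set {(a, b). a \<in> S \<and> b \<in> S \<and> a \<noteq> b}) TT)"

text \<open>A SUT model is given by a parameter set P, domains d, and a constraint formula
  phi whose atoms are pairs (p, v) standing for (p = v).\<close>
definition sut_model :: "'p set \<Rightarrow> ('p \<Rightarrow> 'v set) \<Rightarrow> ('p \<times> 'v) pform \<Rightarrow> bool" where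
  "sut_model P d phi \<longleftrightarrow> finite P \<and> (\<forall>p\<in>P. finite (d p) \<and> d p \<noteq> {})
      \<and> atoms phi \<subseteq> Sigma P d"

definition test_case :: "'p set \<Rightarrow> ('p \<Rightarrow> 'v set) \<Rightarrow> ('p \<times> 'v) pform \<Rightarrow> ('p \<Rightarrow> 'v) \<Rightarrow> bool" where
  "test_case P d phi A \<longleftrightarrow> A \<in> PiE P d \<and> peval (\<lambda>(p, v). A p = v) phi"

definition t_tuple :: "'p set \<Rightarrow> ('p \<Rightarrow> 'v set) \<Rightarrow> nat \<Rightarrow> ('p \<times> 'v) set \<Rightarrow> bool" where
  "t_tuple P d t \<tau> \<longleftrightarrow> finite \<tau> \<and> \<tau> \<subseteq> Sigma P d \<and> inj_on fst \<tau> \<and> card \<tau> = t"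

definition covers :: "('p \<Rightarrow> 'v) \<Rightarrow> ('p \<times> 'v) set \<Rightarrow> bool" where
  "covers A \<tau> \<longleftrightarrow> (\<forall>(p, v)\<in>\<tau>. A p = v)"

definition allowed_tuples :: "'p set \<Rightarrow> ('p \<Rightarrow> 'v set) \<Rightarrow> ('p \<times> 'v) pform \<Rightarrow> nat \<Rightarrow> ('p \<times> 'v) set set" where
  "allowed_tuples P d phi t = {\<tau>. t_tuple P d t \<tau> \<and> (\<exists>A. test_case P d phi A \<and> covers A \<tau>)}"

text \<open>CA(N; t, S): a list of N test cases (repetitions allowed) covering every allowed t-tuple.\<close>
definition is_CA :: "nat \<Rightarrow> nat \<Rightarrow> 'p set \<Rightarrow> ('p \<Rightarrow> 'v set) \<Rightarrow> ('p \<times> 'v) pform \<Rightarrow> ('p \<Rightarrow> 'v) list \<Rightarrow> bool" where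
  "is_CA N t P d phi rows \<longleftrightarrow> length rows = N \<and> (\<forall>A\<in>set rows. test_case P d phi A)
      \<and> (\<forall>\<tau>\<in>allowed_tuples P d phi t. \<exists>A\<in>set rows. covers A \<tau>)"

definition CAN :: "nat \<Rightarrow> 'p set \<Rightarrow> ('p \<Rightarrow> 'v set) \<Rightarrow> ('p \<times> 'v) pform \<Rightarrow> nat" where
  "CAN t P d phi = (LEAST N. \<exists>rows. is_CA N t P d phi rows)"

record 'x pmsat =
  hard :: "'x pform set"
  soft :: "('x pform \<times> nat) list"

definition pmsat_cost :: "'x pmsat \<Rightarrow> ('x \<Rightarrow> bool) \<Rightarrow> nat" where
  "pmsat_cost I \<alpha> = sum_list (map snd (filter (\<lambda>(c, w). \<not> peval \<alpha> c) (soft I)))"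

text \<open>Optimal cost; the infimum of the empty set in enat is \<infinity> (unsatisfiable hard part).\<close>
definition opt_cost :: "'x pmsat \<Rightarrow> enat" where
  "opt_cost I = Inf {enat (pmsat_cost I \<alpha>) | \<alpha>. \<forall>h\<in>hard I. peval \<alpha> h}"

datatype ('p, 'v) var = X nat 'p 'v | C nat "('p \<times> 'v) set" | U nat

definition ccx_hard :: "nat \<Rightarrow> nat \<Rightarrow> 'p set \<Rightarrow> ('p \<Rightarrow> 'v set) \<Rightarrow> ('p \<times> 'v) pform \<Rightarrow> nat
    \<Rightarrow> ('p, 'v) var pform set" where
  "ccx_hard N t P d phi lb =
     \<comment> \<open>(X)\<close>
     {exactly_one {X i p v | v. v \<in> d p} | i p. i \<in> {1..N} \<and> p \<in> P}
   \<union> \<comment> \<open>(SUTX)\<close>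
     {map_pform (\<lambda>(p, v). X i p v) phi | i. i \<in> {1..N}}
   \<union> \<comment> \<open>(CCX a)\<close>
     {Imp (Atom (C i \<tau>)) (Or (Atom (C (i - 1) \<tau>)) (Atom (X i p v))) | i \<tau> p v.
        i \<in> {1..N} \<and> \<tau> \<in> allowed_tuples P d phi t \<and> (p, v) \<in> \<tau>}
   \<union> \<comment> \<open>(CCX b)\<close>
     {Atom (C N \<tau>) | \<tau>. \<tau> \<in> allowed_tuples P d phi t}
   \<union> \<comment> \<open>(CCX c)\<close>
     {Imp (Atom (C N \<tau>)) (Neg (Atom (C 0 \<tau>))) | \<tau>. \<tau> \<in> allowed_tuples P d phi t}
   \<union> \<comment> \<open>(BSU)\<close>
     {Imp (Atom (U (i + 1))) (Atom (U i)) | i. lb + 2 \<le> i \<and> i \<le> N - 1}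
   \<union> \<comment> \<open>(CCU)\<close>
     {Imp (Neg (Atom (C (i - 1) \<tau>))) (Atom (U i)) | i \<tau>.
        lb + 2 \<le> i \<and> i \<le> N \<and> \<tau> \<in> allowed_tuples P d phi t}"

definition ccx_soft :: "nat \<Rightarrow> nat \<Rightarrow> (('p, 'v) var pform \<times> nat) list" where
  "ccx_soft N lb = map (\<lambda>i. (Neg (Atom (U i)), 1)) [lb + 2 ..< N + 1]"

definition PMSat_CCX :: "nat \<Rightarrow> nat \<Rightarrow> 'p set \<Rightarrow> ('p \<Rightarrow> 'v set) \<Rightarrow> ('p \<times> 'v) pform \<Rightarrow> nat
    \<Rightarrow> ('p, 'v) var pmsat" where
  "PMSat_CCX N t P d phi lb = \<lparr>hard = ccx_hard N t P d phi lb, soft = ccx_soft N lb\<rparr>"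

end

theory Submission
  imports Defs
begin

(* A model of the hard clauses and a covering array determine each other. The X-variables of a
   model spell out N test cases, and the chain (CCX a), with c^0 false and c^N true, forces every
   allowed tuple to be covered by one of them; so a model exists only if CAN <= N. If u_i were
   false for some lb + 2 <= i <= CAN, then (CCU) would make the first i - 1 rows a covering
   array, which is impossible; hence at least CAN - (lb + 1) soft clauses are violated.
   Conversely, a minimum covering array padded to N rows, with c^i_tau read as "tau is covered
   by one of the first i rows" and u_i as "i <= CAN", satisfies all hard clauses at exactly
   this cost. *)

lemma peval_map_pform: "peval \<alpha> (map_pform g f) = peval (\<alpha> \<circ> g) f"
  by (induction f) auto

lemma peval_cong: "(\<And>a. a \<in> atoms f \<Longrightarrow> I a = J a) \<Longrightarrow> peval I f = peval J f"
  by (induction f) auto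

lemma set_list_of_set: "finite S \<Longrightarrow> set (list_of_set S) = S"
  using someI_ex[OF finite_distinct_list] unfolding list_of_set_def by blast

lemma peval_exactly_one:
  assumes "finite S"
  shows "peval \<alpha> (exactly_one S) \<longleftrightarrow> (\<exists>!a. a \<in> S \<and> \<alpha> a)"
proof -
  have some: "peval \<alpha> (foldr (\<lambda>a f. Or (Atom a) f) xs FF) \<longleftrightarrow> (\<exists>a\<in>set xs. \<alpha> a)" for xs
    by (induction xs) auto
  have at_most: "peval \<alpha> (foldr (\<lambda>(a, b) f. And (Neg (And (Atom a) (Atom b))) f) ys TT)
      \<longleftrightarrow> (\<forall>(a, b)\<in>set ys. \<not> (\<alpha> a \<and> \<alpha> b))" for ys
    by (induction ys) auto
  have "finite {(a, b). a \<in> S \<and> b \<in> S \<and> a \<noteq> b}"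
    by (rule finite_subset[of _ "S \<times> S"]) (use assms in auto)
  with assms show ?thesis
    unfolding exactly_one_def
    by (auto simp: some at_most set_list_of_set)
qed

definition hard_model :: "'x pmsat \<Rightarrow> ('x \<Rightarrow> bool) \<Rightarrow> bool" where
  "hard_model I \<alpha> \<longleftrightarrow> (\<forall>h\<in>hard I. peval \<alpha> h)"

lemma opt_cost_eq_enatI:
  assumes "hard_model I \<alpha>" and "pmsat_cost I \<alpha> = c"
    and "\<And>\<beta>. hard_model I \<beta> \<Longrightarrow> c \<le> pmsat_cost I \<beta>"
  shows "opt_cost I = enat c"
  unfolding opt_cost_def hard_model_def[symmetric]
proof (rule antisym)
  show "Inf {enat (pmsat_cost I \<beta>) |\<beta>. hard_model I \<beta>} \<le> enat c"
    using assms(1,2) by (intro Inf_lower) auto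
  show "enat c \<le> Inf {enat (pmsat_cost I \<beta>) |\<beta>. hard_model I \<beta>}"
    using assms(3) by (intro Inf_greatest) auto
qed

lemma opt_cost_eq_infinity:
  assumes "\<And>\<alpha>. \<not> hard_model I \<alpha>"
  shows "opt_cost I = \<infinity>"
  using assms unfolding opt_cost_def hard_model_def[symmetric] by (simp add: top_enat_def)

lemma hard_model_PMSat_CCX_iff:
  fixes t :: nat
  assumes "sut_model P d phi"
  defines "T \<equiv> allowed_tuples P d phi t"
  shows "hard_model (PMSat_CCX N t P d phi lb) \<alpha> \<longleftrightarrow>
    (\<forall>i\<in>{1..N}. \<forall>p\<in>P. \<exists>!v. v \<in> d p \<and> \<alpha> (X i p v)) \<and>
    (\<forall>i\<in>{1..N}. peval (\<lambda>(p, v). \<alpha> (X i p v)) phi) \<and>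
    (\<forall>i\<in>{1..N}. \<forall>\<tau>\<in>T. \<forall>(p, v)\<in>\<tau>. \<alpha> (C i \<tau>) \<longrightarrow> \<alpha> (C (i - 1) \<tau>) \<or> \<alpha> (X i p v)) \<and>
    (\<forall>\<tau>\<in>T. \<alpha> (C N \<tau>) \<and> \<not> \<alpha> (C 0 \<tau>)) \<and>
    (\<forall>i. lb + 2 \<le> i \<and> i < N \<longrightarrow> \<alpha> (U (i + 1)) \<longrightarrow> \<alpha> (U i)) \<and>
    (\<forall>i\<in>{lb + 2..N}. \<forall>\<tau>\<in>T. \<not> \<alpha> (C (i - 1) \<tau>) \<longrightarrow> \<alpha> (U i))"
proof -
  have one_value: "peval \<alpha> (exactly_one {X i p v | v. v \<in> d p}) \<longleftrightarrow> (\<exists>!v. v \<in> d p \<and> \<alpha> (X i p v))"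
    if "p \<in> P" for i p
  proof -
    have "finite {X i p v | v. v \<in> d p}"
      using assms(1) that unfolding sut_model_def by (simp add: setcompr_eq_image)
    then show ?thesis by (auto simp: peval_exactly_one)
  qed
  have constraint: "peval \<alpha> (map_pform (\<lambda>(p, v). X i p v) phi) \<longleftrightarrow> peval (\<lambda>(p, v). \<alpha> (X i p v)) phi" for i
    by (simp add: peval_map_pform comp_def split_def)
  have X: "(\<forall>h\<in>{exactly_one {X i p v | v. v \<in> d p} | i p. i \<in> {1..N} \<and> p \<in> P}. peval \<alpha> h)
      \<longleftrightarrow> (\<forall>i\<in>{1..N}. \<forall>p\<in>P. \<exists>!v. v \<in> d p \<and> \<alpha> (X i p v))"
    using one_value by blast
  have SUTX: "(\<forall>h\<in>{map_pform (\<lambda>(p, v). X i p v) phi | i. i \<in> {1..N}}. peval \<alpha> h)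
      \<longleftrightarrow> (\<forall>i\<in>{1..N}. peval (\<lambda>(p, v). \<alpha> (X i p v)) phi)"
    using constraint by blast
  have CCXa: "(\<forall>h\<in>{Imp (Atom (C i \<tau>)) (Or (Atom (C (i - 1) \<tau>)) (Atom (X i p v))) | i \<tau> p v.
        i \<in> {1..N} \<and> \<tau> \<in> T \<and> (p, v) \<in> \<tau>}. peval \<alpha> h)
      \<longleftrightarrow> (\<forall>i\<in>{1..N}. \<forall>\<tau>\<in>T. \<forall>(p, v)\<in>\<tau>. \<alpha> (C i \<tau>) \<longrightarrow> \<alpha> (C (i - 1) \<tau>) \<or> \<alpha> (X i p v))"
    by fastforce
  \<comment> \<open>stated with a trailing conjunct \<open>R\<close> so that it rewrites inside the conjunction chain\<close>
  have CCXbc: "(\<forall>h\<in>{Atom (C N \<tau>) | \<tau>. \<tau> \<in> T}. peval \<alpha> h) \<and>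
      (\<forall>h\<in>{Imp (Atom (C N \<tau>)) (Neg (Atom (C 0 \<tau>))) | \<tau>. \<tau> \<in> T}. peval \<alpha> h) \<and> R
      \<longleftrightarrow> (\<forall>\<tau>\<in>T. \<alpha> (C N \<tau>) \<and> \<not> \<alpha> (C 0 \<tau>)) \<and> R" for R
    by fastforce
  have BSU: "(\<forall>h\<in>{Imp (Atom (U (i + 1))) (Atom (U i)) | i. lb + 2 \<le> i \<and> i \<le> N - 1}. peval \<alpha> h)
      \<longleftrightarrow> (\<forall>i. lb + 2 \<le> i \<and> i < N \<longrightarrow> \<alpha> (U (i + 1)) \<longrightarrow> \<alpha> (U i))"
    by fastforce
  have CCU: "(\<forall>h\<in>{Imp (Neg (Atom (C (i - 1) \<tau>))) (Atom (U i)) | i \<tau>.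
        lb + 2 \<le> i \<and> i \<le> N \<and> \<tau> \<in> T}. peval \<alpha> h)
      \<longleftrightarrow> (\<forall>i\<in>{lb + 2..N}. \<forall>\<tau>\<in>T. \<not> \<alpha> (C (i - 1) \<tau>) \<longrightarrow> \<alpha> (U i))"
    by fastforce
  show ?thesis
    unfolding hard_model_def PMSat_CCX_def ccx_hard_def pmsat.select_convs ball_Un T_def[symmetric]
    by (simp only: X SUTX CCXa BSU CCU conj_assoc CCXbc)
qed

lemma pmsat_cost_PMSat_CCX:
  "pmsat_cost (PMSat_CCX N t P d phi lb) \<alpha> = card {i \<in> {lb + 2..N}. \<alpha> (U i)}"
proof -
  have "sum_list (map snd (filter (\<lambda>(c, w). \<not> peval \<alpha> c) (map (\<lambda>i. (Neg (Atom (U i)), 1)) xs)))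
      = length (filter (\<lambda>i. \<alpha> (U i)) xs)" for xs :: "nat list"
    by (induction xs) auto
  then have "pmsat_cost (PMSat_CCX N t P d phi lb) \<alpha> = length (filter (\<lambda>i. \<alpha> (U i)) [lb + 2..<N + 1])"
    by (simp add: pmsat_cost_def PMSat_CCX_def ccx_soft_def)
  also have "\<dots> = card {i \<in> {lb + 2..N}. \<alpha> (U i)}"
    by (subst distinct_length_filter) (auto intro!: arg_cong[where f = card])
  finally show ?thesis .
qed

lemma finite_allowed_tuples:
  assumes "sut_model P d phi"
  shows "finite (allowed_tuples P d phi t)"
proof (rule finite_subset)
  show "allowed_tuples P d phi t \<subseteq> Pow (Sigma P d)"
    by (auto simp: allowed_tuples_def t_tuple_def)
  show "finite (Pow (Sigma P d))"
    using assms by (auto simp: sut_model_def)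
qed

lemma CAN_attained:
  assumes "sut_model P d phi"
  obtains rows where "is_CA (CAN t P d phi) t P d phi rows"
proof -
  let ?T = "allowed_tuples P d phi t"
  define witness where "witness \<tau> = (SOME A. test_case P d phi A \<and> covers A \<tau>)" for \<tau>
  have "test_case P d phi (witness \<tau>) \<and> covers (witness \<tau>) \<tau>" if "\<tau> \<in> ?T" for \<tau>
  proof -
    have "\<exists>A. test_case P d phi A \<and> covers A \<tau>"
      using that unfolding allowed_tuples_def by blast
    then show ?thesis
      unfolding witness_def by (rule someI_ex)
  qed
  moreover have "set (list_of_set ?T) = ?T"
    using set_list_of_set[OF finite_allowed_tuples[OF assms]] .
  ultimately have "is_CA (length (list_of_set ?T)) t P d phi (map witness (list_of_set ?T))"
    by (auto simp: is_CA_def)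
  then have "\<exists>n rows. is_CA n t P d phi rows"
    by blast
  then have "\<exists>rows. is_CA (CAN t P d phi) t P d phi rows"
    unfolding CAN_def by (rule LeastI_ex)
  with that show ?thesis by blast
qed

text \<open>Rows are indexed from 1, and the last row is repeated beyond \<open>n\<close>.\<close>
lemma is_CA_row_function:
  assumes "is_CA n t P d phi rows" and "0 < n"
  obtains row where "\<And>i. test_case P d phi (row i)"
    and "\<And>\<tau>. \<tau> \<in> allowed_tuples P d phi t \<Longrightarrow> \<exists>i\<in>{1..n}. covers (row i) \<tau>"
proof
  let ?row = "\<lambda>i. rows ! (min i n - 1)"
  have len: "length rows = n"
    using assms(1) by (simp add: is_CA_def)
  show "test_case P d phi (?row i)" for i
    using assms len nth_mem[of "min i n - 1" rows] by (auto simp: is_CA_def)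
  show "\<exists>i\<in>{1..n}. covers (?row i) \<tau>" if "\<tau> \<in> allowed_tuples P d phi t" for \<tau>
  proof -
    have "\<exists>A\<in>set rows. covers A \<tau>"
      using assms(1) that by (simp add: is_CA_def)
    then obtain k where "k < n" "covers (rows ! k) \<tau>"
      using len by (metis in_set_conv_nth)
    then show ?thesis
      by (intro bexI[of _ "k + 1"]) auto
  qed
qed

lemma CAN_le_of_row_function:
  assumes "\<And>i. i \<in> {1..n} \<Longrightarrow> test_case P d phi (row i)"
    and "\<And>\<tau>. \<tau> \<in> allowed_tuples P d phi t \<Longrightarrow> \<exists>i\<in>{1..n}. covers (row i) \<tau>"
  shows "CAN t P d phi \<le> n"
proof -
  have "is_CA n t P d phi (map row [1..<n + 1])"
    using assms unfolding is_CA_def by (auto simp: atLeastLessThanSuc_atLeastAtMost simp del: upt_Suc)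
  then show ?thesis
    unfolding CAN_def by (rule Least_le[OF exI])
qed

definition decoded_row :: "'p set \<Rightarrow> ('p \<Rightarrow> 'v set) \<Rightarrow> (('p, 'v) var \<Rightarrow> bool) \<Rightarrow> nat \<Rightarrow> 'p \<Rightarrow> 'v" where
  "decoded_row P d \<alpha> i p = (if p \<in> P then THE v. v \<in> d p \<and> \<alpha> (X i p v) else undefined)"

lemma decoded_row_eq_iff:
  assumes "\<forall>p\<in>P. \<exists>!v. v \<in> d p \<and> \<alpha> (X i p v)" and "p \<in> P" and "v \<in> d p"
  shows "decoded_row P d \<alpha> i p = v \<longleftrightarrow> \<alpha> (X i p v)"
  using theI'[OF bspec[OF assms(1,2)]] assms unfolding decoded_row_def by auto

lemma decoded_row_in_PiE:
  assumes "\<forall>p\<in>P. \<exists>!v. v \<in> d p \<and> \<alpha> (X i p v)"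
  shows "decoded_row P d \<alpha> i \<in> PiE P d"
proof (rule PiE_I)
  show "decoded_row P d \<alpha> i p \<in> d p" if "p \<in> P" for p
    using theI'[OF bspec[OF assms that]] that unfolding decoded_row_def by auto
  show "decoded_row P d \<alpha> i p = undefined" if "p \<notin> P" for p
    using that unfolding decoded_row_def by simp
qed

lemma test_case_decoded_row:
  assumes S: "sut_model P d phi"
    and one: "\<forall>p\<in>P. \<exists>!v. v \<in> d p \<and> \<alpha> (X i p v)"
    and sat: "peval (\<lambda>(p, v). \<alpha> (X i p v)) phi"
  shows "test_case P d phi (decoded_row P d \<alpha> i)"
proof -
  have "atoms phi \<subseteq> Sigma P d"
    using S by (simp add: sut_model_def)
  then have "peval (\<lambda>(p, v). decoded_row P d \<alpha> i p = v) phi = peval (\<lambda>(p, v). \<alpha> (X i p v)) phi"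
    using decoded_row_eq_iff[OF one] by (intro peval_cong) auto
  with sat decoded_row_in_PiE[OF one] show ?thesis
    by (simp add: test_case_def)
qed

text \<open>If \<open>C k \<tau>\<close> holds, the largest \<open>i \<le> k\<close> with \<open>C i \<tau>\<close> true and \<open>C (i - 1) \<tau>\<close> false
  (it exists since \<open>C 0 \<tau>\<close> is false) is, by (CCX a), a decoded row covering \<open>\<tau>\<close>.\<close>
lemma decoded_rows_cover:
  assumes S: "sut_model P d phi"
    and \<alpha>: "hard_model (PMSat_CCX N t P d phi lb) \<alpha>"
    and \<tau>: "\<tau> \<in> allowed_tuples P d phi t"
  shows "k \<le> N \<Longrightarrow> \<alpha> (C k \<tau>) \<Longrightarrow> \<exists>r\<in>{1..k}. covers (decoded_row P d \<alpha> r) \<tau>"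
proof (induction k)
  case 0
  then show ?case
    using \<alpha> \<tau> unfolding hard_model_PMSat_CCX_iff[OF S] by simp
next
  case (Suc k)
  show ?case
  proof (cases "\<alpha> (C k \<tau>)")
    case True
    with Suc obtain r where "r \<in> {1..k}" "covers (decoded_row P d \<alpha> r) \<tau>"
      by auto
    then show ?thesis
      by (intro bexI[of _ r]) auto
  next
    case False
    have "Suc k \<in> {1..N}"
      using Suc.prems by simp
    have unique: "\<forall>i\<in>{1..N}. \<forall>p\<in>P. \<exists>!v. v \<in> d p \<and> \<alpha> (X i p v)"
      and chain: "\<forall>i\<in>{1..N}. \<forall>\<tau>\<in>allowed_tuples P d phi t. \<forall>(p, v)\<in>\<tau>.
        \<alpha> (C i \<tau>) \<longrightarrow> \<alpha> (C (i - 1) \<tau>) \<or> \<alpha> (X i p v)"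
      using \<alpha> unfolding hard_model_PMSat_CCX_iff[OF S] by simp_all
    have one: "\<forall>p\<in>P. \<exists>!v. v \<in> d p \<and> \<alpha> (X (Suc k) p v)"
      using bspec[OF unique \<open>Suc k \<in> {1..N}\<close>] .
    have step: "\<forall>(p, v)\<in>\<tau>. \<alpha> (C (Suc k) \<tau>) \<longrightarrow> \<alpha> (C k \<tau>) \<or> \<alpha> (X (Suc k) p v)"
      using bspec[OF bspec[OF chain \<open>Suc k \<in> {1..N}\<close>] \<tau>] by simp
    have "covers (decoded_row P d \<alpha> (Suc k)) \<tau>"
      unfolding covers_def
    proof clarify
      fix p v assume pv: "(p, v) \<in> \<tau>"
      moreover have "\<tau> \<subseteq> Sigma P d"
        using \<tau> by (simp add: allowed_tuples_def t_tuple_def)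
      ultimately have "p \<in> P" "v \<in> d p"
        by auto
      moreover have "\<alpha> (X (Suc k) p v)"
        using bspec[OF step pv] Suc.prems False by simp
      ultimately show "decoded_row P d \<alpha> (Suc k) p = v"
        by (simp add: decoded_row_eq_iff[OF one])
    qed
    then show ?thesis
      by (intro bexI[of _ "Suc k"]) auto
  qed
qed

lemma CAN_le_of_hard_model:
  assumes S: "sut_model P d phi"
    and \<alpha>: "hard_model (PMSat_CCX N t P d phi lb) \<alpha>"
    and "j \<le> N" and covered: "\<forall>\<tau>\<in>allowed_tuples P d phi t. \<alpha> (C j \<tau>)"
  shows "CAN t P d phi \<le> j"
proof (rule CAN_le_of_row_function)
  show "test_case P d phi (decoded_row P d \<alpha> i)" if "i \<in> {1..j}" for i
    using \<alpha> that \<open>j \<le> N\<close> unfolding hard_model_PMSat_CCX_iff[OF S]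
    by (intro test_case_decoded_row[OF S]) auto
  show "\<exists>i\<in>{1..j}. covers (decoded_row P d \<alpha> i) \<tau>" if "\<tau> \<in> allowed_tuples P d phi t" for \<tau>
    using decoded_rows_cover[OF S \<alpha> that \<open>j \<le> N\<close>] covered that by blast
qed

lemma hard_model_PMSat_CCX_CAN_le:
  assumes S: "sut_model P d phi" and \<alpha>: "hard_model (PMSat_CCX N t P d phi lb) \<alpha>"
  shows "CAN t P d phi \<le> N"
proof (rule CAN_le_of_hard_model[OF S \<alpha> order.refl])
  show "\<forall>\<tau>\<in>allowed_tuples P d phi t. \<alpha> (C N \<tau>)"
    using \<alpha> unfolding hard_model_PMSat_CCX_iff[OF S] by simp
qed

lemma hard_model_PMSat_CCX_cost_ge:
  assumes S: "sut_model P d phi" and \<alpha>: "hard_model (PMSat_CCX N t P d phi lb) \<alpha>"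
  shows "CAN t P d phi - (lb + 1) \<le> pmsat_cost (PMSat_CCX N t P d phi lb) \<alpha>"
proof -
  let ?K = "CAN t P d phi"
  have "\<alpha> (U i)" if i: "i \<in> {lb + 2..?K}" for i
  proof (rule ccontr)
    assume "\<not> \<alpha> (U i)"
    have "i \<le> N"
      using i hard_model_PMSat_CCX_CAN_le[OF S \<alpha>] by simp
    with \<open>\<not> \<alpha> (U i)\<close> i have "\<forall>\<tau>\<in>allowed_tuples P d phi t. \<alpha> (C (i - 1) \<tau>)"
      using \<alpha> unfolding hard_model_PMSat_CCX_iff[OF S] by auto
    with \<open>i \<le> N\<close> have "?K \<le> i - 1"
      by (intro CAN_le_of_hard_model[OF S \<alpha>]) auto
    with i show False
      by auto
  qed
  then have "{lb + 2..?K} \<subseteq> {i \<in> {lb + 2..N}. \<alpha> (U i)}"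
    using hard_model_PMSat_CCX_CAN_le[OF S \<alpha>] by auto
  then have "card {lb + 2..?K} \<le> card {i \<in> {lb + 2..N}. \<alpha> (U i)}"
    by (intro card_mono) auto
  then show ?thesis
    by (simp add: pmsat_cost_PMSat_CCX)
qed

definition ca_assignment :: "(nat \<Rightarrow> 'p \<Rightarrow> 'v) \<Rightarrow> nat \<Rightarrow> ('p, 'v) var \<Rightarrow> bool" where
  "ca_assignment row n x = (case x of
      X i p v \<Rightarrow> row i p = v
    | C i \<tau> \<Rightarrow> (\<exists>r\<in>{1..i}. covers (row r) \<tau>)
    | U i \<Rightarrow> i \<le> n)"

lemma hard_model_ca_assignment:
  assumes S: "sut_model P d phi" and "n \<le> N"
    and rows: "\<And>i. test_case P d phi (row i)"
    and covered: "\<And>\<tau>. \<tau> \<in> allowed_tuples P d phi t \<Longrightarrow> \<exists>i\<in>{1..n}. covers (row i) \<tau>"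
  shows "hard_model (PMSat_CCX N t P d phi lb) (ca_assignment row n)"
proof -
  have one: "\<exists>!v. v \<in> d p \<and> row i p = v" if "p \<in> P" for i p
    using rows[of i] that by (auto simp: test_case_def)
  have sat: "peval (\<lambda>(p, v). row i p = v) phi" for i
    using rows[of i] by (simp add: test_case_def)
  have step: "row i p = v \<or> (\<exists>r\<in>{1..i - 1}. covers (row r) \<tau>)"
    if "(p, v) \<in> \<tau>" "r \<in> {1..i}" "covers (row r) \<tau>" for i p v \<tau> r
  proof (cases "r = i")
    case True
    with that show ?thesis by (auto simp: covers_def)
  next
    case False
    with that show ?thesis by auto
  qed
  show ?thesis
    unfolding hard_model_PMSat_CCX_iff[OF S] ca_assignment_def
    using one sat step covered \<open>n \<le> N\<close> by (fastforce simp: Ball_def)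
qed

lemma pmsat_cost_ca_assignment:
  assumes "n \<le> N"
  shows "pmsat_cost (PMSat_CCX N t P d phi lb) (ca_assignment row n) = n - (lb + 1)"
proof -
  have "{i \<in> {lb + 2..N}. ca_assignment row n (U i)} = {lb + 2..n}"
    using assms by (auto simp: ca_assignment_def)
  then show ?thesis
    by (simp add: pmsat_cost_PMSat_CCX)
qed

theorem proposition4:
  fixes P :: "'p set" and d :: "'p \<Rightarrow> 'v set" and phi :: "('p \<times> 'v) pform"
    and t N lb :: nat
  assumes S: "sut_model P d phi"
    and ex_test: "\<exists>A. test_case P d phi A"
    and t: "1 \<le> t" "t \<le> card P"
    and N: "1 \<le> N"
    and lb: "lb < CAN t P d phi"
  shows "opt_cost (PMSat_CCX N t P d phi lb) =
           (if CAN t P d phi \<le> N then enat (CAN t P d phi - (lb + 1)) else \<infinity>)"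
proof (cases "CAN t P d phi \<le> N")
  case True
  obtain rows where "is_CA (CAN t P d phi) t P d phi rows"
    using CAN_attained[OF S] .
  then obtain row where rows: "\<And>i. test_case P d phi (row i)"
    and covered: "\<And>\<tau>. \<tau> \<in> allowed_tuples P d phi t \<Longrightarrow> \<exists>i\<in>{1..CAN t P d phi}. covers (row i) \<tau>"
    using lb by (elim is_CA_row_function) auto
  have "opt_cost (PMSat_CCX N t P d phi lb) = enat (CAN t P d phi - (lb + 1))"
    using hard_model_ca_assignment[OF S True rows covered] pmsat_cost_ca_assignment[OF True]
      hard_model_PMSat_CCX_cost_ge[OF S]
    by (rule opt_cost_eq_enatI)
  with True show ?thesis
    by simp
next
  case False
  then have "opt_cost (PMSat_CCX N t P d phi lb) = \<infinity>"
    using hard_model_PMSat_CCX_CAN_le[OF S] by (intro opt_cost_eq_infinity) blast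
  with False show ?thesis
    by simp
qed

end
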